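(* Let $X$ be a real Hilbert space, let $m\ge1$ be an integer, $I=\{1,\dots,m\}$, let $(R_i)_{i\in I}$ be operators $X\to X$ and $\beta_i>0$ such that each $R_i$ is $\tfrac1{\beta_i}$-cocoercive. Set $R=R_m\cdots R_1$. Then there exists a nonexpansive $N\colon X\to X$ such that $$R=\beta_m\cdots\beta_1\Big(\tfrac1{1+m}\mathrm{Id}+\tfrac m{1+m}N\Big).$$
   Context: For $\beta>0$, $T\colon X\to X$ is $\tfrac1\beta$-cocoercive if $T=\tfrac\beta2(\mathrm{Id}+N)$ for some nonexpansive ($1$-Lipschitz) $N\colon X\to X$. *)

theory Defs
  imports "HOL-Analysis.Analysis"
begin

definition nonexpansive :: "('a::real_normed_vector \<Rightarrow> 'a) \<Rightarrow> bool" where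
  "nonexpansive N \<longleftrightarrow> (\<forall>x y. norm (N x - N y) \<le> norm (x - y))"

definition cocoercive :: "real \<Rightarrow> ('a::real_normed_vector \<Rightarrow> 'a) \<Rightarrow> bool" where
  "cocoercive \<beta> T \<longleftrightarrow> \<beta> > 0 \<and> (\<exists>N. nonexpansive N \<and> T = (\<lambda>x. (\<beta> / 2) *\<^sub>R (x + N x)))"

fun comp_ops :: "(nat \<Rightarrow> 'a \<Rightarrow> 'a) \<Rightarrow> nat \<Rightarrow> 'a \<Rightarrow> 'a" where
  "comp_ops R 0 = id"
| "comp_ops R (Suc k) = R (Suc k) \<circ> comp_ops R k"

end

theory Submission
  imports Defs
begin

text \<open>Write an operator as T = c \<cdot> F with F averaged. A firmly nonexpansive map is averaged with
  constant 1, and by a weighted parallelogram inequality the constants of averaged maps add under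
  composition, so the normalized product of the R_i is averaged with constant m. An operator that
  is averaged with constant c is exactly an under-relaxation (1/(1+c)) Id + (c/(1+c)) N of a
  nonexpansive N.\<close>

text \<open>An operator is \<alpha>-averaged in the usual sense iff it is averaged with constant \<alpha>/(1-\<alpha>);
  in this parametrization the constants add under composition.\<close>
definition averaged :: "real \<Rightarrow> ('a::real_inner \<Rightarrow> 'a) \<Rightarrow> bool" where
  "averaged c T \<longleftrightarrow>
     (\<forall>x y. norm (T x - T y)^2 + norm ((x - y) - (T x - T y))^2 / c \<le> norm (x - y)^2)"

lemma norm_add_square: "norm (a + b)^2 = norm a^2 + 2 * inner a b + norm (b::'a::real_inner)^2"
  by (simp add: power2_norm_eq_inner inner_add inner_commute)

lemma norm_diff_square: "norm (a - b)^2 = norm a^2 - 2 * inner a b + norm (b::'a::real_inner)^2"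
  by (simp add: power2_norm_eq_inner inner_diff inner_commute)

lemma norm_add_square_le_weighted:
  fixes p q :: "'a::real_inner"
  assumes "a > 0" "b > 0"
  shows "norm (p + q)^2 / (a + b) \<le> norm p^2 / a + norm q^2 / b"
proof -
  have "0 \<le> norm (b *\<^sub>R p - a *\<^sub>R q)^2" by simp
  also have "\<dots> = b^2 * norm p^2 - 2 * a * b * inner p q + a^2 * norm q^2"
    by (simp add: norm_diff_square power_mult_distrib)
  finally have "a * b * norm (p + q)^2 \<le> (a + b) * (b * norm p^2 + a * norm q^2)"
    unfolding norm_add_square by (simp add: algebra_simps power2_eq_square)
  with assms show ?thesis by (simp add: field_simps)
qed

lemma averaged_comp:
  fixes G H :: "'a::real_inner \<Rightarrow> 'a"
  assumes "a > 0" "b > 0" and G: "averaged a G" and H: "averaged b H"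
  shows "averaged (a + b) (H \<circ> G)"
  unfolding averaged_def
proof (intro allI)
  fix x y :: 'a
  define u where "u = x - y"
  define v where "v = G x - G y"
  define w where "w = H (G x) - H (G y)"
  have "norm v^2 + norm (u - v)^2 / a \<le> norm u^2"
    using G unfolding averaged_def u_def v_def by blast
  moreover have "norm w^2 + norm (v - w)^2 / b \<le> norm v^2"
    using H unfolding averaged_def v_def w_def by blast
  moreover have "norm ((u - v) + (v - w))^2 / (a + b) \<le> norm (u - v)^2 / a + norm (v - w)^2 / b"
    by (rule norm_add_square_le_weighted[OF assms(1,2)])
  ultimately have "norm w^2 + norm (u - w)^2 / (a + b) \<le> norm u^2"
    by simp
  then show "norm ((H \<circ> G) x - (H \<circ> G) y)^2 + norm ((x - y) - ((H \<circ> G) x - (H \<circ> G) y))^2 / (a + b)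
      \<le> norm (x - y)^2"
    by (simp add: u_def w_def)
qed

lemma averaged_conj_scaleR:
  fixes F :: "'a::real_inner \<Rightarrow> 'a"
  assumes F: "averaged c F" and "s \<noteq> 0"
  shows "averaged c (\<lambda>y. (1/s) *\<^sub>R F (s *\<^sub>R y))"
  unfolding averaged_def
proof (intro allI)
  fix x y :: 'a
  define d where "d = s *\<^sub>R x - s *\<^sub>R y"
  define e where "e = F (s *\<^sub>R x) - F (s *\<^sub>R y)"
  have "norm e^2 + norm (d - e)^2 / c \<le> norm d^2"
    using F unfolding averaged_def d_def e_def by blast
  then have "(1/s)^2 * (norm e^2 + norm (d - e)^2 / c) \<le> (1/s)^2 * norm d^2"
    by (rule mult_left_mono) simp
  moreover have "x - y = (1/s) *\<^sub>R d"
    using \<open>s \<noteq> 0\<close> by (simp add: d_def scaleR_diff_right)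
  moreover have "(1/s) *\<^sub>R F (s *\<^sub>R x) - (1/s) *\<^sub>R F (s *\<^sub>R y) = (1/s) *\<^sub>R e"
    by (simp add: e_def scaleR_diff_right)
  moreover have "(1/s) *\<^sub>R d - (1/s) *\<^sub>R e = (1/s) *\<^sub>R (d - e)"
    by (simp add: scaleR_diff_right)
  ultimately show "norm ((1/s) *\<^sub>R F (s *\<^sub>R x) - (1/s) *\<^sub>R F (s *\<^sub>R y))^2
      + norm ((x - y) - ((1/s) *\<^sub>R F (s *\<^sub>R x) - (1/s) *\<^sub>R F (s *\<^sub>R y)))^2 / c
      \<le> norm (x - y)^2"
    using \<open>s \<noteq> 0\<close> by (simp only:) (simp add: power_divide distrib_left)
qed

lemma averaged_half_id_plus_nonexpansive:
  fixes N :: "'a::real_inner \<Rightarrow> 'a"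
  assumes "nonexpansive N"
  shows "averaged 1 (\<lambda>y. (1/2) *\<^sub>R (y + N y))"
  unfolding averaged_def
proof (intro allI)
  fix x y :: 'a
  define d where "d = x - y"
  define e where "e = N x - N y"
  have "norm e \<le> norm d"
    using assms unfolding nonexpansive_def d_def e_def by blast
  have "(1/2) *\<^sub>R (x + N x) - (1/2) *\<^sub>R (y + N y) = (1/2) *\<^sub>R (d + e)"
    by (simp add: d_def e_def algebra_simps)
  moreover have "(x - y) - (1/2) *\<^sub>R (d + e) = (1/2) *\<^sub>R (d - e)"
    by (simp add: d_def[symmetric] algebra_simps flip: scaleR_2)
  moreover have "norm ((1/2) *\<^sub>R (d + e))^2 + norm ((1/2) *\<^sub>R (d - e))^2 = (norm d^2 + norm e^2) / 2"
    by (simp only: norm_scaleR power_mult_distrib norm_add_square norm_diff_square)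
      (simp add: algebra_simps power2_eq_square)
  ultimately have "norm ((1/2) *\<^sub>R (x + N x) - (1/2) *\<^sub>R (y + N y))^2
      + norm ((x - y) - ((1/2) *\<^sub>R (x + N x) - (1/2) *\<^sub>R (y + N y)))^2 / 1
      = (norm d^2 + norm e^2) / 2"
    by simp
  also have "\<dots> \<le> norm (x - y)^2"
    using \<open>norm e \<le> norm d\<close> by (simp add: d_def[symmetric] power_mono)
  finally show "norm ((1/2) *\<^sub>R (x + N x) - (1/2) *\<^sub>R (y + N y))^2
      + norm ((x - y) - ((1/2) *\<^sub>R (x + N x) - (1/2) *\<^sub>R (y + N y)))^2 / 1 \<le> norm (x - y)^2" .
qed

lemma cocoercive_imp_scaled_averaged:
  assumes "cocoercive \<beta> T"
  obtains F where "averaged 1 F" and "\<And>x. T x = \<beta> *\<^sub>R F x"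
proof -
  obtain N where "nonexpansive N" and "T = (\<lambda>x. (\<beta> / 2) *\<^sub>R (x + N x))"
    using assms unfolding cocoercive_def by blast
  then show ?thesis
    using that[OF averaged_half_id_plus_nonexpansive] by simp
qed

lemma averaged_imp_relaxation_of_nonexpansive:
  fixes G :: "'a::real_inner \<Rightarrow> 'a"
  assumes "c > 0" and G: "averaged c G"
  shows "\<exists>N. nonexpansive N \<and> G = (\<lambda>x. (1 / (1 + c)) *\<^sub>R x + (c / (1 + c)) *\<^sub>R N x)"
proof
  define N where "N x = ((1 + c) / c) *\<^sub>R G x - (1 / c) *\<^sub>R x" for x
  have "norm (N x - N y) \<le> norm (x - y)" for x y
  proof -
    define d where "d = x - y"
    define g where "g = G x - G y"
    have "norm g^2 + norm (d - g)^2 / c \<le> norm d^2"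
      using G unfolding averaged_def d_def g_def by blast
    then have "c * norm g^2 + (norm d^2 - 2 * inner g d + norm g^2) \<le> c * norm d^2"
      using \<open>c > 0\<close> by (simp add: norm_diff_square inner_commute field_simps)
    then have "(1 + c) * ((1 + c) * norm g^2 - 2 * inner g d) \<le> (1 + c) * ((c - 1) * norm d^2)"
      using \<open>c > 0\<close> by (intro mult_left_mono) (auto simp: algebra_simps)
    moreover have "norm ((1 + c) *\<^sub>R g - d)^2 = (1 + c)^2 * norm g^2 - 2 * (1 + c) * inner g d + norm d^2"
      using \<open>c > 0\<close> by (simp only: norm_diff_square norm_scaleR inner_scaleR_left power_mult_distrib)
    ultimately have "norm ((1 + c) *\<^sub>R g - d)^2 \<le> (c * norm d)^2"
      by (simp add: algebra_simps power2_eq_square)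
    then have bound: "norm ((1 + c) *\<^sub>R g - d) \<le> c * norm d"
      by (rule power2_le_imp_le) (use \<open>c > 0\<close> in simp)
    have "N x - N y = (1 / c) *\<^sub>R ((1 + c) *\<^sub>R g - d)"
    proof -
      have "N x - N y = ((1 + c) / c) *\<^sub>R g - (1 / c) *\<^sub>R d"
        unfolding N_def g_def d_def by (simp only: scaleR_diff_right) (simp add: algebra_simps)
      then show ?thesis
        by (simp add: scaleR_diff_right)
    qed
    then have "norm (N x - N y) = norm ((1 + c) *\<^sub>R g - d) / c"
      using \<open>c > 0\<close> by simp
    also have "\<dots> \<le> norm d"
      using bound \<open>c > 0\<close> by (simp add: divide_le_eq mult.commute)
    finally show ?thesis
      by (simp add: d_def)
  qed
  moreover have "G x = (1 / (1 + c)) *\<^sub>R x + (c / (1 + c)) *\<^sub>R N x" for x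
    using \<open>c > 0\<close> by (simp add: N_def scaleR_diff_right add_pos_pos)
  ultimately show "nonexpansive N \<and> G = (\<lambda>x. (1 / (1 + c)) *\<^sub>R x + (c / (1 + c)) *\<^sub>R N x)"
    by (auto simp: nonexpansive_def)
qed

lemma comp_ops_cocoercive_eq_scaled_averaged:
  fixes R :: "nat \<Rightarrow> 'a::real_inner \<Rightarrow> 'a"
  assumes "k \<ge> 1" and co: "\<And>i. i \<in> {1..k} \<Longrightarrow> cocoercive (\<beta> i) (R i)"
  shows "\<exists>G. averaged (real k) G \<and> comp_ops R k = (\<lambda>x. (\<Prod>i\<in>{1..k}. \<beta> i) *\<^sub>R G x)"
  using assms
proof (induction k rule: nat_induct_at_least)
  case base
  obtain F where "averaged 1 F" and "\<And>x. R 1 x = \<beta> 1 *\<^sub>R F x"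
    using base.prems[of 1] cocoercive_imp_scaled_averaged by auto
  then show ?case
    by (auto simp: fun_eq_iff)
next
  case (Suc k)
  obtain G where G: "averaged (real k) G" and RG: "comp_ops R k = (\<lambda>x. (\<Prod>i\<in>{1..k}. \<beta> i) *\<^sub>R G x)"
    using Suc.IH Suc.prems by auto
  obtain F where F: "averaged 1 F" and RF: "\<And>x. R (Suc k) x = \<beta> (Suc k) *\<^sub>R F x"
    using Suc.prems[of "Suc k"] cocoercive_imp_scaled_averaged by auto
  define c where "c = (\<Prod>i\<in>{1..k}. \<beta> i)"
  have "c > 0"
    unfolding c_def using Suc.prems by (intro prod_pos) (auto simp: cocoercive_def)
  define H where "H y = (1/c) *\<^sub>R F (c *\<^sub>R y)" for y
  have "averaged 1 H"
    unfolding H_def using F \<open>c > 0\<close> by (intro averaged_conj_scaleR) auto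
  then have "averaged (real k + 1) (H \<circ> G)"
    using G \<open>k \<ge> 1\<close> by (intro averaged_comp) auto
  moreover have "comp_ops R (Suc k) x = (\<Prod>i\<in>{1..Suc k}. \<beta> i) *\<^sub>R (H \<circ> G) x" for x
  proof -
    have "comp_ops R (Suc k) x = \<beta> (Suc k) *\<^sub>R F (c *\<^sub>R G x)"
      by (simp add: RG RF c_def)
    also have "\<dots> = (c * \<beta> (Suc k)) *\<^sub>R H (G x)"
      using \<open>c > 0\<close> by (simp add: H_def)
    finally show ?thesis
      by (simp add: c_def prod.cl_ivl_Suc)
  qed
  ultimately show ?case
    by (auto simp: fun_eq_iff add.commute)
qed

theorem mainTheorem11:
  fixes R :: "nat \<Rightarrow> 'a::{real_inner, complete_space} \<Rightarrow> 'a"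
    and \<beta> :: "nat \<Rightarrow> real"
    and m :: nat
  assumes "m \<ge> 1"
    and "\<And>i. i \<in> {1..m} \<Longrightarrow> \<beta> i > 0"
    and "\<And>i. i \<in> {1..m} \<Longrightarrow> cocoercive (\<beta> i) (R i)"
  shows "\<exists>N. nonexpansive N \<and>
           comp_ops R m = (\<lambda>x. (\<Prod>i\<in>{1..m}. \<beta> i) *\<^sub>R
              ((1 / (1 + real m)) *\<^sub>R x + (real m / (1 + real m)) *\<^sub>R N x))"
proof -
  obtain G where "averaged (real m) G" and RG: "comp_ops R m = (\<lambda>x. (\<Prod>i\<in>{1..m}. \<beta> i) *\<^sub>R G x)"
    using comp_ops_cocoercive_eq_scaled_averaged assms(1,3) by blast
  moreover have "real m > 0"
    using assms(1) by simp
  ultimately obtain N where "nonexpansive N"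
    and "G = (\<lambda>x. (1 / (1 + real m)) *\<^sub>R x + (real m / (1 + real m)) *\<^sub>R N x)"
    using averaged_imp_relaxation_of_nonexpansive by blast
  with RG show ?thesis
    by blast
qed

end
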